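(* Let $L$ and $R$ be nonempty subsets of a group $G$ with $G=\mathcal{W}(\bar{L})\mathcal{W}(\bar{R})$, and let $k$ be the minimum weak connection length in $G$ relative to $(L,R)$. If $k$ is infinite, then $2\mathrm{S}(G;L,R)$ has infinitely many weakly connected components. If $k$ is finite, then $2\mathrm{S}(G;L,R)$ has exactly $k$ weakly connected components, and all of them have the same number of vertices (the same cardinality). Moreover, if $k$ is finite and $L\cap N_G(L)\neq\emptyset$ or $R\cap N_G(R)\neq\emptyset$, then all weakly connected components are isomorphic as digraphs.
   Context: For nonempty subsets $L,R$ of a group $G$, the two-sided group digraph $2\mathrm{S}(G;L,R)$ has vertex set $G$ and a directed arc $(g,h)$ if and only if $h=l^{-1}gr$ for some $l\in L$, $r\in R$. Write $\bar{L}=L\cup L^{-1}$, $\bar{R}=R\cup R^{-1}$; for nonempty $S$, $\mathcal{W}(S)$ is the set of elements expressible as finite products $s_1\cdots s_n$, $n\ge1$, $s_i\in S$, and $AB=\{ab:a\in A,b\in B\}$. Vertex $g$ is weakly connected to $h$, written $g\sim h$, if there is a sequence $g=g_0,\dots,g_n=h$ such that for each $i$ either $(g_{i-1},g_i)$ or $(g_i,g_{i-1})$ is an arc. The minimum weak connection length in $G$ relative to $(L,R)$ is the minimum positive length $k$ of a word $s_1\cdots s_k$ whose letters all lie in $L$, or all lie in $L^{-1}$, or all lie in $R$, or all lie in $R^{-1}$, and whose value is weakly connected to $e$; it is infinite if no such word exists. $N_G(L)=\{g\in G: g^{-1}Lg=L\}$ is the normalizer of the subset $L$. *)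

theory Defs
  imports "HOL-Algebra.Algebra" "HOL-Library.Extended_Nat"
begin

definition ts_arc :: "('a, 'b) monoid_scheme \<Rightarrow> 'a set \<Rightarrow> 'a set \<Rightarrow> 'a \<Rightarrow> 'a \<Rightarrow> bool" where
  "ts_arc G L R g h \<longleftrightarrow> g \<in> carrier G \<and> h \<in> carrier G \<and>
     (\<exists>l\<in>L. \<exists>r\<in>R. h = inv\<^bsub>G\<^esub> l \<otimes>\<^bsub>G\<^esub> g \<otimes>\<^bsub>G\<^esub> r)"

definition weakly_conn :: "('a, 'b) monoid_scheme \<Rightarrow> 'a set \<Rightarrow> 'a set \<Rightarrow> 'a \<Rightarrow> 'a \<Rightarrow> bool" where
  "weakly_conn G L R = (\<lambda>g h. ts_arc G L R g h \<or> ts_arc G L R h g)\<^sup>*\<^sup>*"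

definition weak_components :: "('a, 'b) monoid_scheme \<Rightarrow> 'a set \<Rightarrow> 'a set \<Rightarrow> 'a set set" where
  "weak_components G L R = {{h \<in> carrier G. weakly_conn G L R g h} | g. g \<in> carrier G}"

definition sym_closure :: "('a, 'b) monoid_scheme \<Rightarrow> 'a set \<Rightarrow> 'a set" where
  "sym_closure G S = S \<union> (\<lambda>s. inv\<^bsub>G\<^esub> s) ` S"

fun words_len :: "('a, 'b) monoid_scheme \<Rightarrow> 'a set \<Rightarrow> nat \<Rightarrow> 'a set" where
  "words_len G S 0 = {\<one>\<^bsub>G\<^esub>}"
| "words_len G S (Suc n) = {w \<otimes>\<^bsub>G\<^esub> s | w s. w \<in> words_len G S n \<and> s \<in> S}"

definition words :: "('a, 'b) monoid_scheme \<Rightarrow> 'a set \<Rightarrow> 'a set" where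
  "words G S = (\<Union>n\<in>{n. n \<ge> 1}. words_len G S n)"

definition conn_lengths :: "('a, 'b) monoid_scheme \<Rightarrow> 'a set \<Rightarrow> 'a set \<Rightarrow> nat set" where
  "conn_lengths G L R = {n. n \<ge> 1 \<and>
     (\<exists>S\<in>{L, (\<lambda>x. inv\<^bsub>G\<^esub> x) ` L, R, (\<lambda>x. inv\<^bsub>G\<^esub> x) ` R}.
        \<exists>w\<in>words_len G S n. weakly_conn G L R w \<one>\<^bsub>G\<^esub>)}"

definition min_weak_conn_len :: "('a, 'b) monoid_scheme \<Rightarrow> 'a set \<Rightarrow> 'a set \<Rightarrow> enat" where
  "min_weak_conn_len G L R = Inf (enat ` conn_lengths G L R)"

definition induced_iso :: "('a, 'b) monoid_scheme \<Rightarrow> 'a set \<Rightarrow> 'a set \<Rightarrow> 'a set \<Rightarrow> 'a set \<Rightarrow> bool" where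
  "induced_iso G L R C D \<longleftrightarrow> (\<exists>f. bij_betw f C D \<and>
     (\<forall>x\<in>C. \<forall>y\<in>C. ts_arc G L R x y \<longleftrightarrow> ts_arc G L R (f x) (f y)))"

end

theory Submission
  imports Defs
begin

(* Fix l0 in L and put s = inv l0. Left multiplication by l0 or by s maps weakly connected
   vertices to weakly connected vertices, and up to weak connectivity a letter of L or L^-1
   multiplied on the left, or a letter of R or R^-1 multiplied on the right, acts like
   multiplication by l0 or s on the left. As G = W(L-bar) W(R-bar), every vertex is weakly
   connected to a power s^n, so the components are the components C_n of s^n, and C_a = C_b iff
   s^(a-b) ~ e. These differences form a subgroup of the integers whose positive elements are
   exactly the connection lengths; hence there are k components when the minimum length k is
   finite and infinitely many otherwise. Left multiplication by s^(b-a) is a bijection from C_a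
   onto C_b, and a digraph isomorphism when l0 normalises L; when r in R normalises R, right
   multiplication by r is an isomorphism from C_(a+1) onto C_a. *)

lemma int_succ_chain:
  assumes Q: "equivp Q" and succ: "\<And>a::int. Q (f a) (f (a + 1))"
  shows "Q (f a) (f b)"
proof -
  have up: "Q (f x) (f (x + int n))" for x n
  proof (induction n)
    case 0
    show ?case using equivp_reflp[OF Q] by simp
  next
    case (Suc n)
    have "x + int (Suc n) = x + int n + 1" by simp
    then show ?case using equivp_transp[OF Q Suc succ[of "x + int n"]] by argo
  qed
  show ?thesis
  proof (cases "a \<le> b")
    case True
    then show ?thesis using up[of a "nat (b - a)"] by simp
  next
    case False
    then show ?thesis using equivp_symp[OF Q up[of b "nat (a - b)"]] by simp
  qed
qed

lemma Inf_enat_image_eq_enat: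
  assumes "Inf (enat ` A) = enat k"
  shows "k \<in> A" and "\<And>m. m \<in> A \<Longrightarrow> k \<le> m"
proof -
  have "A \<noteq> {}" using assms by (auto simp: top_enat_def)
  then have "Inf (enat ` A) \<in> enat ` A"
    unfolding Inf_enat_def by (auto intro: LeastI)
  then show "k \<in> A" using assms by auto
  show "k \<le> m" if "m \<in> A" for m
    using Inf_lower[of "enat m" "enat ` A"] that assms by auto
qed

lemma Inf_enat_image_eq_infinity: "Inf (enat ` A) = \<infinity> \<Longrightarrow> A = {}"
  using Inf_lower[of _ "enat ` A"] by fastforce

lemma (in group) inv_mult_cancel_left [simp]:
  "x \<in> carrier G \<Longrightarrow> y \<in> carrier G \<Longrightarrow> inv x \<otimes> (x \<otimes> y) = y"
  by (simp add: m_assoc[symmetric])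

lemma (in group) mult_inv_cancel_left [simp]:
  "x \<in> carrier G \<Longrightarrow> y \<in> carrier G \<Longrightarrow> x \<otimes> (inv x \<otimes> y) = y"
  by (simp add: m_assoc[symmetric])

lemma (in group) normalizer_conj_mem:
  assumes "H \<subseteq> carrier G" "g \<in> normalizer G H" "h \<in> H"
  shows "g \<otimes> h \<otimes> inv g \<in> H"
  using assms unfolding normalizer_def stabilizer_def l_coset_def r_coset_def by auto

lemma (in monoid) words_len_closed: "S \<subseteq> carrier G \<Longrightarrow> w \<in> words_len G S m \<Longrightarrow> w \<in> carrier G"
  by (induction m arbitrary: w) auto

lemma (in monoid) nat_pow_in_words_len: "x \<in> S \<Longrightarrow> x [^] m \<in> words_len G S m"
  by (induction m) auto

lemma equivp_weakly_conn: "equivp (weakly_conn G L R)"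
  unfolding weakly_conn_def by (rule equivp_rtranclp) (auto intro: sympI)

lemma weakly_conn_refl: "weakly_conn G L R g g"
  by (rule equivp_reflp[OF equivp_weakly_conn])

lemma weakly_conn_sym: "weakly_conn G L R g h \<Longrightarrow> weakly_conn G L R h g"
  by (rule equivp_symp[OF equivp_weakly_conn])

lemma weakly_conn_trans: "weakly_conn G L R g h \<Longrightarrow> weakly_conn G L R h k \<Longrightarrow> weakly_conn G L R g k"
  by (rule equivp_transp[OF equivp_weakly_conn])

lemma weakly_conn_carrier: "weakly_conn G L R g h \<Longrightarrow> g \<in> carrier G \<Longrightarrow> h \<in> carrier G"
  unfolding weakly_conn_def by (induction rule: rtranclp_induct) (auto simp: ts_arc_def)

lemma weakly_conn_map:
  assumes arc: "\<And>x y. ts_arc G L R x y \<Longrightarrow> weakly_conn G L R (f x) (f y)"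
    and "weakly_conn G L R g h"
  shows "weakly_conn G L R (f g) (f h)"
  using assms(2) unfolding weakly_conn_def
proof (induction rule: rtranclp_induct)
  case base
  show ?case by simp
next
  case (step y z)
  from step.hyps(2) have "weakly_conn G L R (f y) (f z)"
  proof
    assume "ts_arc G L R y z"
    then show ?thesis by (rule arc)
  next
    assume "ts_arc G L R z y"
    then show ?thesis by (rule weakly_conn_sym[OF arc])
  qed
  with step.IH show ?case
    using weakly_conn_trans[of G L R "f g" "f y" "f z"] unfolding weakly_conn_def by simp
qed

definition weak_component :: "('a, 'b) monoid_scheme \<Rightarrow> 'a set \<Rightarrow> 'a set \<Rightarrow> 'a \<Rightarrow> 'a set" where
  "weak_component G L R g = {h \<in> carrier G. weakly_conn G L R g h}"

lemma weak_components_eq_image: "weak_components G L R = weak_component G L R ` carrier G"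
  unfolding weak_components_def weak_component_def by auto

lemma weak_component_eq_iff:
  assumes "g \<in> carrier G"
  shows "weak_component G L R g = weak_component G L R h \<longleftrightarrow> weakly_conn G L R g h"
proof
  assume "weak_component G L R g = weak_component G L R h"
  moreover have "g \<in> weak_component G L R g"
    using assms weakly_conn_refl unfolding weak_component_def by fast
  ultimately have "weakly_conn G L R h g"
    unfolding weak_component_def by blast
  then show "weakly_conn G L R g h"
    by (rule weakly_conn_sym)
next
  assume gh: "weakly_conn G L R g h"
  have "weakly_conn G L R g x \<longleftrightarrow> weakly_conn G L R h x" for x
    using weakly_conn_trans[OF gh] weakly_conn_trans[OF weakly_conn_sym[OF gh]] by blast
  then show "weak_component G L R g = weak_component G L R h"
    unfolding weak_component_def by simp
qed

lemma equivp_induced_iso: "equivp (induced_iso G L R)"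
proof (intro equivpI reflpI sympI transpI)
  show "induced_iso G L R A A" for A
    unfolding induced_iso_def by (intro exI[of _ id]) auto
  show "induced_iso G L R B A" if "induced_iso G L R A B" for A B
  proof -
    from that obtain f where f: "bij_betw f A B"
      and arcs: "\<forall>x\<in>A. \<forall>y\<in>A. ts_arc G L R x y \<longleftrightarrow> ts_arc G L R (f x) (f y)"
      unfolding induced_iso_def by blast
    have g: "bij_betw (inv_into A f) B A" by (rule bij_betw_inv_into[OF f])
    have "ts_arc G L R x y \<longleftrightarrow> ts_arc G L R (inv_into A f x) (inv_into A f y)"
      if "x \<in> B" "y \<in> B" for x y
      using arcs bij_betwE[OF g] that bij_betw_inv_into_right[OF f] by metis
    then show ?thesis using g unfolding induced_iso_def by blast
  qed
  show "induced_iso G L R A C" if "induced_iso G L R A B" "induced_iso G L R B C" for A B C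
  proof -
    from that obtain f g where f: "bij_betw f A B" "\<forall>x\<in>A. \<forall>y\<in>A. ts_arc G L R x y \<longleftrightarrow> ts_arc G L R (f x) (f y)"
      and g: "bij_betw g B C" "\<forall>x\<in>B. \<forall>y\<in>B. ts_arc G L R x y \<longleftrightarrow> ts_arc G L R (g x) (g y)"
      unfolding induced_iso_def by blast
    have "\<forall>x\<in>A. \<forall>y\<in>A. ts_arc G L R x y \<longleftrightarrow> ts_arc G L R (g (f x)) (g (f y))"
      using f g bij_betwE by metis
    then show ?thesis using bij_betw_trans[OF f(1) g(1)] unfolding induced_iso_def by auto
  qed
qed

locale two_sided_group_digraph = group G for G (structure) +
  fixes L R :: "'a set"
  assumes L_carrier: "L \<subseteq> carrier G" and R_carrier: "R \<subseteq> carrier G"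
begin

abbreviation wc :: "'a \<Rightarrow> 'a \<Rightarrow> bool" where "wc \<equiv> weakly_conn G L R"

lemma L_mem_carrier [simp]: "l \<in> L \<Longrightarrow> l \<in> carrier G"
  using L_carrier by blast

lemma R_mem_carrier [simp]: "r \<in> R \<Longrightarrow> r \<in> carrier G"
  using R_carrier by blast

lemma weakly_conn_arcI:
  "l \<in> L \<Longrightarrow> r \<in> R \<Longrightarrow> x \<in> carrier G \<Longrightarrow> y = inv l \<otimes> x \<otimes> r \<Longrightarrow> wc x y"
  unfolding weakly_conn_def by (rule r_into_rtranclp) (auto simp: ts_arc_def)

(* An arc x -> inv l' x r is replaced by the path inv l x <- x inv r -> inv l' x -> inv l (inv l' x r),
   and for left multiplication by l by the path l x -> x r -> inv l' x r r <- l (inv l' x r). *)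
lemma weakly_conn_mult_inv_left:
  assumes l: "l \<in> L" and "wc g h"
  shows "wc (inv l \<otimes> g) (inv l \<otimes> h)"
proof (rule weakly_conn_map[OF _ \<open>wc g h\<close>])
  fix x y assume "ts_arc G L R x y"
  then obtain l' r where l': "l' \<in> L" and r: "r \<in> R" and x: "x \<in> carrier G"
    and y: "y = inv l' \<otimes> x \<otimes> r"
    by (auto simp: ts_arc_def)
  have "wc (x \<otimes> inv r) (inv l \<otimes> x)"
    by (rule weakly_conn_arcI[OF l r]) (use l r x in \<open>auto simp: m_assoc\<close>)
  moreover have "wc (x \<otimes> inv r) (inv l' \<otimes> x)"
    by (rule weakly_conn_arcI[OF l' r]) (use l' r x in \<open>auto simp: m_assoc\<close>)
  moreover have "wc (inv l' \<otimes> x) (inv l \<otimes> y)"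
    by (rule weakly_conn_arcI[OF l r]) (use l l' r x y in \<open>auto simp: m_assoc\<close>)
  ultimately show "wc (inv l \<otimes> x) (inv l \<otimes> y)"
    by (meson weakly_conn_sym weakly_conn_trans)
qed

lemma weakly_conn_mult_left:
  assumes l: "l \<in> L" and "wc g h"
  shows "wc (l \<otimes> g) (l \<otimes> h)"
proof (rule weakly_conn_map[OF _ \<open>wc g h\<close>])
  fix x y assume "ts_arc G L R x y"
  then obtain l' r where l': "l' \<in> L" and r: "r \<in> R" and x: "x \<in> carrier G"
    and y: "y = inv l' \<otimes> x \<otimes> r"
    by (auto simp: ts_arc_def)
  have "wc (l \<otimes> x) (x \<otimes> r)"
    by (rule weakly_conn_arcI[OF l r]) (use l r x in \<open>auto simp: m_assoc[symmetric]\<close>)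
  moreover have "wc (x \<otimes> r) (inv l' \<otimes> x \<otimes> r \<otimes> r)"
    by (rule weakly_conn_arcI[OF l' r]) (use l' r x in \<open>auto simp: m_assoc\<close>)
  moreover have "wc (l \<otimes> y) (inv l' \<otimes> x \<otimes> r \<otimes> r)"
    by (rule weakly_conn_arcI[OF l r]) (use l l' r x y in \<open>auto simp: m_assoc[symmetric]\<close>)
  ultimately show "wc (l \<otimes> x) (l \<otimes> y)"
    by (meson weakly_conn_sym weakly_conn_trans)
qed

lemma ts_arc_mult_left:
  assumes a: "a \<in> normalizer G L" and "ts_arc G L R x y"
  shows "ts_arc G L R (a \<otimes> x) (a \<otimes> y)"
proof -
  obtain l r where l: "l \<in> L" and r: "r \<in> R" and x: "x \<in> carrier G" and y: "y \<in> carrier G"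
    and y_eq: "y = inv l \<otimes> x \<otimes> r"
    using \<open>ts_arc G L R x y\<close> by (auto simp: ts_arc_def)
  have aG: "a \<in> carrier G"
    using a subgroup.mem_carrier[OF normalizer_imp_subgroup[OF L_carrier]] by blast
  have "a \<otimes> l \<otimes> inv a \<in> L"
    by (rule normalizer_conj_mem[OF L_carrier a l])
  moreover have "a \<otimes> y = inv (a \<otimes> l \<otimes> inv a) \<otimes> (a \<otimes> x) \<otimes> r"
    using aG l r x y_eq by (simp add: inv_mult_group m_assoc)
  ultimately show ?thesis
    using r aG x y unfolding ts_arc_def by blast
qed

lemma ts_arc_mult_left_iff:
  assumes a: "a \<in> normalizer G L" and x: "x \<in> carrier G" and y: "y \<in> carrier G"
  shows "ts_arc G L R (a \<otimes> x) (a \<otimes> y) \<longleftrightarrow> ts_arc G L R x y"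
proof
  have N: "subgroup (normalizer G L) G"
    by (rule normalizer_imp_subgroup[OF L_carrier])
  have aG: "a \<in> carrier G"
    using a subgroup.mem_carrier[OF N] by blast
  assume "ts_arc G L R (a \<otimes> x) (a \<otimes> y)"
  then have "ts_arc G L R (inv a \<otimes> (a \<otimes> x)) (inv a \<otimes> (a \<otimes> y))"
    by (rule ts_arc_mult_left[OF subgroup.m_inv_closed[OF N a]])
  then show "ts_arc G L R x y"
    using aG x y by (simp add: m_assoc[symmetric])
qed (rule ts_arc_mult_left[OF a])

lemma ts_arc_mult_right:
  assumes b: "b \<in> normalizer G R" and "ts_arc G L R x y"
  shows "ts_arc G L R (x \<otimes> b) (y \<otimes> b)"
proof -
  have N: "subgroup (normalizer G R) G"
    by (rule normalizer_imp_subgroup[OF R_carrier])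
  obtain l r where l: "l \<in> L" and r: "r \<in> R" and x: "x \<in> carrier G" and y: "y \<in> carrier G"
    and y_eq: "y = inv l \<otimes> x \<otimes> r"
    using \<open>ts_arc G L R x y\<close> by (auto simp: ts_arc_def)
  have bG: "b \<in> carrier G"
    using b subgroup.mem_carrier[OF N] by blast
  have "inv b \<otimes> r \<otimes> inv (inv b) \<in> R"
    by (rule normalizer_conj_mem[OF R_carrier subgroup.m_inv_closed[OF N b] r])
  moreover have "y \<otimes> b = inv l \<otimes> (x \<otimes> b) \<otimes> (inv b \<otimes> r \<otimes> inv (inv b))"
    using bG l r x y_eq by (simp add: m_assoc)
  ultimately show ?thesis
    using l bG x y unfolding ts_arc_def by blast
qed

lemma ts_arc_mult_right_iff:
  assumes b: "b \<in> normalizer G R" and x: "x \<in> carrier G" and y: "y \<in> carrier G"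
  shows "ts_arc G L R (x \<otimes> b) (y \<otimes> b) \<longleftrightarrow> ts_arc G L R x y"
proof
  have N: "subgroup (normalizer G R) G"
    by (rule normalizer_imp_subgroup[OF R_carrier])
  have bG: "b \<in> carrier G"
    using b subgroup.mem_carrier[OF N] by blast
  assume "ts_arc G L R (x \<otimes> b) (y \<otimes> b)"
  then have "ts_arc G L R (x \<otimes> b \<otimes> inv b) (y \<otimes> b \<otimes> inv b)"
    by (rule ts_arc_mult_right[OF subgroup.m_inv_closed[OF N b]])
  then show "ts_arc G L R x y"
    using bG x y by (simp add: m_assoc)
qed (rule ts_arc_mult_right[OF b])

end

locale based_two_sided_group_digraph = two_sided_group_digraph +
  fixes l0 :: 'a
  assumes l0_in_L: "l0 \<in> L" and R_nonempty: "R \<noteq> {}"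
begin

lemma l0_carrier [simp]: "l0 \<in> carrier G"
  using l0_in_L by simp

definition spow :: "int \<Rightarrow> 'a" where
  "spow n = inv l0 [^] n"

lemma spow_closed [simp]: "spow n \<in> carrier G"
  unfolding spow_def using l0_in_L by simp

lemma spow_add: "spow (a + b) = spow a \<otimes> spow b"
  unfolding spow_def using l0_in_L by (simp add: int_pow_mult)

lemma spow_0 [simp]: "spow 0 = \<one>"
  unfolding spow_def by simp

lemma spow_1: "spow 1 = inv l0"
  unfolding spow_def using l0_in_L by simp

lemma spow_minus_1: "spow (-1) = l0"
  unfolding spow_def using l0_in_L by (simp add: int_pow_neg)

lemma spow_succ: "spow (a + 1) = inv l0 \<otimes> spow a"
  using spow_add[of 1 a] by (simp add: spow_1 add.commute)

lemma spow_pred: "spow (a - 1) = l0 \<otimes> spow a"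
  using spow_add[of "-1" a] by (simp add: spow_minus_1)

lemma spow_nat: "spow (int m) = inv l0 [^] m"
  unfolding spow_def by (simp add: int_pow_int)

lemma spow_mult_assoc: "x \<in> carrier G \<Longrightarrow> spow a \<otimes> (spow b \<otimes> x) = spow (a + b) \<otimes> x"
  by (simp add: spow_add m_assoc)

lemma weakly_conn_mult_spow:
  assumes "wc g h" and g: "g \<in> carrier G"
  shows "wc (spow n \<otimes> g) (spow n \<otimes> h)"
proof (induction n rule: int_induct[where k = 0])
  case base
  show ?case using assms(1) g weakly_conn_carrier[OF assms] by simp
next
  case (step1 i)
  from step1(2) have "wc (inv l0 \<otimes> (spow i \<otimes> g)) (inv l0 \<otimes> (spow i \<otimes> h))"
    by (rule weakly_conn_mult_inv_left[OF l0_in_L])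
  then show ?case
    using g weakly_conn_carrier[OF assms] by (simp add: spow_succ m_assoc)
next
  case (step2 i)
  from step2(2) have "wc (l0 \<otimes> (spow i \<otimes> g)) (l0 \<otimes> (spow i \<otimes> h))"
    by (rule weakly_conn_mult_left[OF l0_in_L])
  then show ?case
    using g weakly_conn_carrier[OF assms] by (simp add: spow_pred m_assoc)
qed

definition left_acts_as :: "'a \<Rightarrow> int \<Rightarrow> bool" where
  "left_acts_as t d \<longleftrightarrow> (\<forall>x\<in>carrier G. wc (t \<otimes> x) (spow d \<otimes> x))"

definition right_acts_as :: "'a \<Rightarrow> int \<Rightarrow> bool" where
  "right_acts_as t d \<longleftrightarrow> (\<forall>x\<in>carrier G. wc (x \<otimes> t) (spow d \<otimes> x))"

lemma left_acts_as_mult: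
  assumes "t \<in> carrier G" "u \<in> carrier G" "left_acts_as t d" "left_acts_as u e"
  shows "left_acts_as (t \<otimes> u) (d + e)"
  unfolding left_acts_as_def
proof
  fix x assume x: "x \<in> carrier G"
  have "wc (t \<otimes> (u \<otimes> x)) (spow d \<otimes> (u \<otimes> x))"
    using assms(2,3) x unfolding left_acts_as_def by simp
  moreover have "wc (spow d \<otimes> (u \<otimes> x)) (spow d \<otimes> (spow e \<otimes> x))"
    using assms(2,4) x unfolding left_acts_as_def by (simp add: weakly_conn_mult_spow)
  ultimately show "wc (t \<otimes> u \<otimes> x) (spow (d + e) \<otimes> x)"
    using assms(1,2) x by (simp add: m_assoc spow_mult_assoc weakly_conn_trans)
qed

lemma right_acts_as_mult:
  assumes "t \<in> carrier G" "u \<in> carrier G" "right_acts_as t d" "right_acts_as u e"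
  shows "right_acts_as (t \<otimes> u) (d + e)"
  unfolding right_acts_as_def
proof
  fix x assume x: "x \<in> carrier G"
  have "wc (x \<otimes> t \<otimes> u) (spow e \<otimes> (x \<otimes> t))"
    using assms(1,4) x unfolding right_acts_as_def by simp
  moreover have "wc (spow e \<otimes> (x \<otimes> t)) (spow e \<otimes> (spow d \<otimes> x))"
    using assms(1,3) x unfolding right_acts_as_def by (simp add: weakly_conn_mult_spow)
  ultimately show "wc (x \<otimes> (t \<otimes> u)) (spow (d + e) \<otimes> x)"
    using assms(1,2) x by (simp add: m_assoc spow_mult_assoc add.commute weakly_conn_trans)
qed

lemma left_acts_as_L:
  assumes l: "l \<in> L" shows "left_acts_as l (-1)"
  unfolding left_acts_as_def spow_minus_1
proof
  fix x assume x: "x \<in> carrier G"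
  obtain r where r: "r \<in> R" using R_nonempty by blast
  have "wc (l \<otimes> x) (x \<otimes> r)"
    by (rule weakly_conn_arcI[OF l r]) (use l r x in \<open>auto simp: m_assoc[symmetric]\<close>)
  moreover have "wc (l0 \<otimes> x) (x \<otimes> r)"
    by (rule weakly_conn_arcI[OF l0_in_L r]) (use r x in \<open>auto simp: m_assoc[symmetric]\<close>)
  ultimately show "wc (l \<otimes> x) (l0 \<otimes> x)"
    by (meson weakly_conn_sym weakly_conn_trans)
qed

lemma left_acts_as_inv_L:
  assumes l: "l \<in> L" shows "left_acts_as (inv l) 1"
  unfolding left_acts_as_def spow_1
proof
  fix x assume x: "x \<in> carrier G"
  obtain r where r: "r \<in> R" using R_nonempty by blast
  have "wc (x \<otimes> inv r) (inv l \<otimes> x)"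
    by (rule weakly_conn_arcI[OF l r]) (use l r x in \<open>auto simp: m_assoc\<close>)
  moreover have "wc (x \<otimes> inv r) (inv l0 \<otimes> x)"
    by (rule weakly_conn_arcI[OF l0_in_L r]) (use r x in \<open>auto simp: m_assoc\<close>)
  ultimately show "wc (inv l \<otimes> x) (inv l0 \<otimes> x)"
    by (meson weakly_conn_sym weakly_conn_trans)
qed

lemma right_acts_as_R:
  assumes r: "r \<in> R" shows "right_acts_as r (-1)"
  unfolding right_acts_as_def spow_minus_1
proof
  fix x assume x: "x \<in> carrier G"
  have "wc (l0 \<otimes> x) (x \<otimes> r)"
    by (rule weakly_conn_arcI[OF l0_in_L r]) (use r x in \<open>auto simp: m_assoc[symmetric]\<close>)
  then show "wc (x \<otimes> r) (l0 \<otimes> x)" by (rule weakly_conn_sym)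
qed

lemma right_acts_as_inv_R:
  assumes r: "r \<in> R" shows "right_acts_as (inv r) 1"
  unfolding right_acts_as_def spow_1
proof
  fix x assume x: "x \<in> carrier G"
  show "wc (x \<otimes> inv r) (inv l0 \<otimes> x)"
    by (rule weakly_conn_arcI[OF l0_in_L r]) (use r x in \<open>auto simp: m_assoc\<close>)
qed

lemma weakly_conn_spow_if_left_acts_as: "left_acts_as w d \<Longrightarrow> w \<in> carrier G \<Longrightarrow> wc w (spow d)"
  unfolding left_acts_as_def by (metis one_closed r_one spow_closed)

lemma weakly_conn_spow_if_right_acts_as: "right_acts_as w d \<Longrightarrow> w \<in> carrier G \<Longrightarrow> wc w (spow d)"
  unfolding right_acts_as_def by (metis one_closed l_one r_one spow_closed)

lemma left_acts_as_words_len: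
  assumes S: "S \<subseteq> carrier G" and letters: "\<And>t. t \<in> S \<Longrightarrow> left_acts_as t d"
  shows "w \<in> words_len G S m \<Longrightarrow> left_acts_as w (int m * d)"
proof (induction m arbitrary: w)
  case 0
  then show ?case by (simp add: left_acts_as_def weakly_conn_refl)
next
  case (Suc m)
  then obtain v t where w: "w = v \<otimes> t" and v: "v \<in> words_len G S m" and t: "t \<in> S" by auto
  have "left_acts_as (v \<otimes> t) (int m * d + d)"
    by (rule left_acts_as_mult) (use Suc.IH[OF v] letters[OF t] words_len_closed[OF S v] t S in auto)
  then show ?case using w by (simp add: algebra_simps)
qed

lemma right_acts_as_words_len:
  assumes S: "S \<subseteq> carrier G" and letters: "\<And>t. t \<in> S \<Longrightarrow> right_acts_as t d"
  shows "w \<in> words_len G S m \<Longrightarrow> right_acts_as w (int m * d)"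
proof (induction m arbitrary: w)
  case 0
  then show ?case by (simp add: right_acts_as_def weakly_conn_refl)
next
  case (Suc m)
  then obtain v t where w: "w = v \<otimes> t" and v: "v \<in> words_len G S m" and t: "t \<in> S" by auto
  have "right_acts_as (v \<otimes> t) (int m * d + d)"
    by (rule right_acts_as_mult) (use Suc.IH[OF v] letters[OF t] words_len_closed[OF S v] t S in auto)
  then show ?case using w by (simp add: algebra_simps)
qed

lemma left_acts_as_words_len_ex:
  assumes S: "S \<subseteq> carrier G" and letters: "\<And>t. t \<in> S \<Longrightarrow> \<exists>d. left_acts_as t d"
  shows "w \<in> words_len G S m \<Longrightarrow> \<exists>d. left_acts_as w d"
proof (induction m arbitrary: w)
  case 0
  have "left_acts_as \<one> 0" by (simp add: left_acts_as_def weakly_conn_refl)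
  with 0 show ?case by auto
next
  case (Suc m)
  then obtain v t where w: "w = v \<otimes> t" and v: "v \<in> words_len G S m" and t: "t \<in> S" by auto
  obtain d e where "left_acts_as v d" and "left_acts_as t e"
    using Suc.IH[OF v] letters[OF t] by blast
  then have "left_acts_as (v \<otimes> t) (d + e)"
    by (rule left_acts_as_mult[rotated 2]) (use words_len_closed[OF S v] t S in auto)
  then show ?case using w by blast
qed

lemma right_acts_as_words_len_ex:
  assumes S: "S \<subseteq> carrier G" and letters: "\<And>t. t \<in> S \<Longrightarrow> \<exists>d. right_acts_as t d"
  shows "w \<in> words_len G S m \<Longrightarrow> \<exists>d. right_acts_as w d"
proof (induction m arbitrary: w)
  case 0
  have "right_acts_as \<one> 0" by (simp add: right_acts_as_def weakly_conn_refl)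
  with 0 show ?case by auto
next
  case (Suc m)
  then obtain v t where w: "w = v \<otimes> t" and v: "v \<in> words_len G S m" and t: "t \<in> S" by auto
  obtain d e where "right_acts_as v d" and "right_acts_as t e"
    using Suc.IH[OF v] letters[OF t] by blast
  then have "right_acts_as (v \<otimes> t) (d + e)"
    by (rule right_acts_as_mult[rotated 2]) (use words_len_closed[OF S v] t S in auto)
  then show ?case using w by blast
qed

definition periods :: "int set" where
  "periods = {d. wc (spow d) \<one>}"

lemma weakly_conn_spow_iff: "wc (spow a) (spow b) \<longleftrightarrow> a - b \<in> periods"
proof
  assume "wc (spow a) (spow b)"
  from weakly_conn_mult_spow[OF this, of "-b"]
  have "wc (spow (- b + a)) (spow (- b + b))" by (simp only: spow_add spow_closed)
  then show "a - b \<in> periods" unfolding periods_def by simp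
next
  assume "a - b \<in> periods"
  then have "wc (spow (a - b)) (spow 0)" unfolding periods_def by simp
  from weakly_conn_mult_spow[OF this, of b]
  have "wc (spow (b + (a - b))) (spow (b + 0))" by (simp only: spow_add spow_closed)
  then show "wc (spow a) (spow b)" by simp
qed

lemma periods_add: "a \<in> periods \<Longrightarrow> b \<in> periods \<Longrightarrow> a + b \<in> periods"
  using weakly_conn_spow_iff[of "a + b" b] weakly_conn_spow_iff[of b 0] weakly_conn_spow_iff[of "a + b" 0]
  by (auto intro: weakly_conn_trans)

lemma periods_uminus: "a \<in> periods \<Longrightarrow> - a \<in> periods"
  using weakly_conn_spow_iff[of a 0] weakly_conn_spow_iff[of 0 a] by (auto intro: weakly_conn_sym)

lemma periods_mult: "d \<in> periods \<Longrightarrow> d * q \<in> periods"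
proof (induction q rule: int_induct[where k = 0])
  case base
  show ?case unfolding periods_def by (simp add: weakly_conn_refl)
next
  case (step1 i)
  then show ?case using periods_add[of "d * i" d] by (simp add: algebra_simps)
next
  case (step2 i)
  then show ?case using periods_add[of "d * i" "- d"] periods_uminus by (simp add: algebra_simps)
qed

lemma conn_lengths_eq: "conn_lengths G L R = {m. 1 \<le> m \<and> int m \<in> periods}"
proof -
  have "int m \<in> periods"
    if S: "S \<in> {L, (\<lambda>x. inv x) ` L, R, (\<lambda>x. inv x) ` R}" and w: "w \<in> words_len G S m" and w1: "wc w \<one>" for S w m
  proof -
    have SG: "S \<subseteq> carrier G" using S L_carrier R_carrier by auto
    have wG: "w \<in> carrier G" by (rule words_len_closed[OF SG w])
    have "\<exists>d \<in> {-1, 1}. wc w (spow (int m * d))"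
      using S
    proof (elim insertE emptyE)
      assume "S = L"
      then have "left_acts_as w (int m * -1)"
        using left_acts_as_words_len[OF SG _ w] left_acts_as_L by blast
      then show ?thesis using weakly_conn_spow_if_left_acts_as wG by blast
    next
      assume "S = (\<lambda>x. inv x) ` L"
      then have "left_acts_as w (int m * 1)"
        using left_acts_as_words_len[OF SG _ w] left_acts_as_inv_L by blast
      then show ?thesis using weakly_conn_spow_if_left_acts_as wG by blast
    next
      assume "S = R"
      then have "right_acts_as w (int m * -1)"
        using right_acts_as_words_len[OF SG _ w] right_acts_as_R by blast
      then show ?thesis using weakly_conn_spow_if_right_acts_as wG by blast
    next
      assume "S = (\<lambda>x. inv x) ` R"
      then have "right_acts_as w (int m * 1)"
        using right_acts_as_words_len[OF SG _ w] right_acts_as_inv_R by blast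
      then show ?thesis using weakly_conn_spow_if_right_acts_as wG by blast
    qed
    then obtain d where d: "d \<in> {-1, 1}" and "wc w (spow (int m * d))" by blast
    with w1 have "int m * d \<in> periods"
      unfolding periods_def by (blast intro: weakly_conn_sym weakly_conn_trans)
    with d show ?thesis using periods_uminus by fastforce
  qed
  moreover have "inv l0 \<in> (\<lambda>x. inv x) ` L" using l0_in_L by blast
  ultimately show ?thesis
    unfolding conn_lengths_def
    using nat_pow_in_words_len[of "inv l0" "(\<lambda>x. inv x) ` L"] by (fastforce simp: periods_def spow_nat)
qed

definition component_at :: "int \<Rightarrow> 'a set" where
  "component_at n = weak_component G L R (spow n)"

lemma component_at_carrier: "y \<in> component_at a \<Longrightarrow> y \<in> carrier G"
  unfolding component_at_def weak_component_def by simp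

lemma component_at_eq_iff: "component_at a = component_at b \<longleftrightarrow> a - b \<in> periods"
  unfolding component_at_def by (simp add: weak_component_eq_iff weakly_conn_spow_iff)

lemma conn_length_if_component_at_eq:
  assumes "component_at a = component_at b" and "a \<noteq> b"
  shows "nat \<bar>a - b\<bar> \<in> conn_lengths G L R"
proof -
  have "a - b \<in> periods" using assms(1) component_at_eq_iff by blast
  then have "\<bar>a - b\<bar> \<in> periods" using periods_uminus[of "a - b"] by (simp add: abs_if)
  then show ?thesis using assms(2) by (simp add: conn_lengths_eq)
qed

lemma spow_mult_component_at: "y \<in> component_at a \<Longrightarrow> spow n \<otimes> y \<in> component_at (a + n)"
  unfolding component_at_def weak_component_def
  using weakly_conn_mult_spow[of "spow a" y n] by (simp add: spow_add[symmetric] add.commute)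

lemma right_acts_as_mult_component_at:
  assumes "right_acts_as t d" and t: "t \<in> carrier G" and y: "y \<in> component_at a"
  shows "y \<otimes> t \<in> component_at (a + d)"
proof -
  have yG: "y \<in> carrier G" using component_at_carrier[OF y] .
  have "wc (spow (a + d)) (spow d \<otimes> y)"
    using spow_mult_component_at[OF y, of d] unfolding component_at_def weak_component_def by simp
  moreover have "wc (y \<otimes> t) (spow d \<otimes> y)"
    using assms(1) yG unfolding right_acts_as_def by simp
  ultimately show ?thesis
    unfolding component_at_def weak_component_def using yG t
    by (blast intro: weakly_conn_sym weakly_conn_trans)
qed

lemma bij_betw_spow_mult_component_at:
  "bij_betw ((\<otimes>) (spow n)) (component_at a) (component_at (a + n))"
proof (rule bij_betw_byWitness[where f' = "(\<otimes>) (spow (- n))"])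
  show "\<forall>y\<in>component_at a. spow (- n) \<otimes> (spow n \<otimes> y) = y"
    using component_at_carrier by (simp add: spow_mult_assoc)
  show "\<forall>y\<in>component_at (a + n). spow n \<otimes> (spow (- n) \<otimes> y) = y"
    using component_at_carrier by (simp add: spow_mult_assoc)
  show "(\<otimes>) (spow n) ` component_at a \<subseteq> component_at (a + n)"
    using spow_mult_component_at by blast
  show "(\<otimes>) (spow (- n)) ` component_at (a + n) \<subseteq> component_at a"
    using spow_mult_component_at[of _ "a + n" "- n"] by auto
qed

lemma bij_betw_mult_right_component_at:
  assumes r: "r \<in> R"
  shows "bij_betw (\<lambda>y. y \<otimes> r) (component_at (a + 1)) (component_at a)"
proof (rule bij_betw_byWitness[where f' = "\<lambda>y. y \<otimes> inv r"])
  show "\<forall>y\<in>component_at (a + 1). y \<otimes> r \<otimes> inv r = y"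
    using component_at_carrier r by (simp add: m_assoc)
  show "\<forall>y\<in>component_at a. y \<otimes> inv r \<otimes> r = y"
    using component_at_carrier r by (simp add: m_assoc)
  show "(\<lambda>y. y \<otimes> r) ` component_at (a + 1) \<subseteq> component_at a"
    using right_acts_as_mult_component_at[OF right_acts_as_R[OF r], of _ "a + 1"] r by auto
  show "(\<lambda>y. y \<otimes> inv r) ` component_at a \<subseteq> component_at (a + 1)"
    using right_acts_as_mult_component_at[OF right_acts_as_inv_R[OF r], of _ a] r by auto
qed

lemma induced_iso_component_at:
  assumes "l0 \<in> normalizer G L"
  shows "induced_iso G L R (component_at a) (component_at b)"
proof -
  have N: "subgroup (normalizer G L) G"
    by (rule normalizer_imp_subgroup[OF L_carrier])
  have n: "spow (b - a) \<in> normalizer G L"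
    unfolding spow_def by (rule subgroup_int_pow_closed[OF N subgroup.m_inv_closed[OF N assms]])
  have "bij_betw ((\<otimes>) (spow (b - a))) (component_at a) (component_at b)"
    using bij_betw_spow_mult_component_at[of "b - a" a] by simp
  moreover have "\<forall>x\<in>component_at a. \<forall>y\<in>component_at a.
      ts_arc G L R x y \<longleftrightarrow> ts_arc G L R (spow (b - a) \<otimes> x) (spow (b - a) \<otimes> y)"
    using ts_arc_mult_left_iff[OF n] component_at_carrier by simp
  ultimately show ?thesis
    unfolding induced_iso_def by blast
qed

lemma induced_iso_component_at_succ:
  assumes "r \<in> R" and "r \<in> normalizer G R"
  shows "induced_iso G L R (component_at (a + 1)) (component_at a)"
proof -
  have "\<forall>x\<in>component_at (a + 1). \<forall>y\<in>component_at (a + 1).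
      ts_arc G L R x y \<longleftrightarrow> ts_arc G L R (x \<otimes> r) (y \<otimes> r)"
    using ts_arc_mult_right_iff[OF assms(2)] component_at_carrier by simp
  with bij_betw_mult_right_component_at[OF assms(1)] show ?thesis
    unfolding induced_iso_def by blast
qed

end

locale generated_two_sided_group_digraph = based_two_sided_group_digraph +
  assumes generated: "carrier G = words G (sym_closure G L) <#> words G (sym_closure G R)"
begin

lemma weakly_conn_spow_ex:
  assumes g: "g \<in> carrier G"
  shows "\<exists>n. wc g (spow n)"
proof -
  have SL: "sym_closure G L \<subseteq> carrier G" and SR: "sym_closure G R \<subseteq> carrier G"
    unfolding sym_closure_def using L_carrier R_carrier by auto
  obtain a b ma mb where a: "a \<in> words_len G (sym_closure G L) ma"
    and b: "b \<in> words_len G (sym_closure G R) mb" and g_eq: "g = a \<otimes> b"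
    using g generated unfolding set_mult_def words_def by blast
  have bG: "b \<in> carrier G" by (rule words_len_closed[OF SR b])
  obtain d where "left_acts_as a d"
    using left_acts_as_words_len_ex[OF SL _ a] left_acts_as_L left_acts_as_inv_L
    unfolding sym_closure_def by blast
  then have ab: "wc (a \<otimes> b) (spow d \<otimes> b)"
    using bG unfolding left_acts_as_def by blast
  obtain e where "right_acts_as b e"
    using right_acts_as_words_len_ex[OF SR _ b] right_acts_as_R right_acts_as_inv_R
    unfolding sym_closure_def by blast
  then have "wc b (spow e)" by (rule weakly_conn_spow_if_right_acts_as[OF _ bG])
  then have "wc (spow d \<otimes> b) (spow (d + e))"
    using weakly_conn_mult_spow[of b "spow e" d] bG by (simp add: spow_add)
  with ab show ?thesis unfolding g_eq by (blast intro: weakly_conn_trans)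
qed

lemma weak_components_eq_range: "weak_components G L R = range component_at"
proof -
  have "weak_component G L R g \<in> range component_at" if g: "g \<in> carrier G" for g
  proof -
    obtain n where "wc g (spow n)" using weakly_conn_spow_ex[OF g] by blast
    then have "weak_component G L R g = component_at n"
      unfolding component_at_def by (simp add: weak_component_eq_iff[OF g])
    then show ?thesis by simp
  qed
  moreover have "component_at n \<in> weak_component G L R ` carrier G" for n
    unfolding component_at_def by simp
  ultimately show ?thesis
    unfolding weak_components_eq_image by auto
qed

lemma weak_components_infinite:
  assumes "min_weak_conn_len G L R = \<infinity>"
  shows "infinite (weak_components G L R)"
proof -
  have "conn_lengths G L R = {}"
    using assms unfolding min_weak_conn_len_def by (rule Inf_enat_image_eq_infinity)
  then have "inj component_at"
    using conn_length_if_component_at_eq by (metis empty_iff injI)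
  then show ?thesis
    unfolding weak_components_eq_range by (simp add: finite_image_iff infinite_UNIV_int)
qed

lemma weak_components_card:
  assumes k: "min_weak_conn_len G L R = enat k"
  shows "finite (weak_components G L R) \<and> card (weak_components G L R) = k"
proof -
  have k_mem: "k \<in> conn_lengths G L R" and k_min: "\<And>m. m \<in> conn_lengths G L R \<Longrightarrow> k \<le> m"
    using Inf_enat_image_eq_enat[OF k[unfolded min_weak_conn_len_def]] by blast+
  then have k_pos: "1 \<le> k" and k_period: "int k \<in> periods"
    by (auto simp: conn_lengths_eq)
  have "component_at n \<in> component_at ` {0..<int k}" for n
  proof
    show "component_at n = component_at (n mod int k)"
      using periods_mult[OF k_period, of "n div int k"]
      by (simp add: component_at_eq_iff minus_mod_eq_mult_div)
    show "n mod int k \<in> {0..<int k}" using k_pos by simp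
  qed
  then have range_eq: "range component_at = component_at ` {0..<int k}"
    by auto
  have "inj_on component_at {0..<int k}"
  proof (rule inj_onI, rule ccontr)
    fix a b assume a: "a \<in> {0..<int k}" and b: "b \<in> {0..<int k}"
      and eq: "component_at a = component_at b" and "a \<noteq> b"
    then have "k \<le> nat \<bar>a - b\<bar>"
      using k_min conn_length_if_component_at_eq by blast
    with a b show False by auto
  qed
  then show ?thesis
    unfolding weak_components_eq_range range_eq by (simp add: card_image)
qed

lemma weak_components_bij:
  assumes "C \<in> weak_components G L R" and "D \<in> weak_components G L R"
  shows "\<exists>f. bij_betw f C D"
proof -
  obtain a b where C: "C = component_at a" and D: "D = component_at b"
    using assms unfolding weak_components_eq_range by blast
  have "bij_betw ((\<otimes>) (spow (b - a))) C D"
    using bij_betw_spow_mult_component_at[of "b - a" a] unfolding C D by simp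
  then show ?thesis by blast
qed

lemma weak_components_induced_iso:
  assumes normal: "l0 \<in> normalizer G L \<or> R \<inter> normalizer G R \<noteq> {}"
    and "C \<in> weak_components G L R" and "D \<in> weak_components G L R"
  shows "induced_iso G L R C D"
proof -
  obtain a b where C: "C = component_at a" and D: "D = component_at b"
    using assms(2,3) unfolding weak_components_eq_range by blast
  from normal have "induced_iso G L R (component_at a) (component_at b)"
  proof
    assume "l0 \<in> normalizer G L"
    then show ?thesis by (rule induced_iso_component_at)
  next
    assume "R \<inter> normalizer G R \<noteq> {}"
    then obtain r where r: "r \<in> R" "r \<in> normalizer G R" by blast
    show ?thesis
    proof (rule int_succ_chain[OF equivp_induced_iso])
      show "induced_iso G L R (component_at n) (component_at (n + 1))" for n
        by (rule equivp_symp[OF equivp_induced_iso induced_iso_component_at_succ[OF r]])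
    qed
  qed
  then show ?thesis unfolding C D .
qed

end

theorem mainTheorem9:
  fixes G (structure) and L R :: "'a set"
  assumes "group G"
    and "L \<subseteq> carrier G" and "L \<noteq> {}"
    and "R \<subseteq> carrier G" and "R \<noteq> {}"
    and "carrier G = words G (sym_closure G L) <#> words G (sym_closure G R)"
  shows "(min_weak_conn_len G L R = \<infinity> \<longrightarrow> infinite (weak_components G L R))
    \<and> (\<forall>k::nat. min_weak_conn_len G L R = enat k \<longrightarrow>
         card (weak_components G L R) = k \<and> finite (weak_components G L R)
         \<and> (\<forall>C\<in>weak_components G L R. \<forall>D\<in>weak_components G L R. \<exists>f. bij_betw f C D)
         \<and> ((L \<inter> normalizer G L \<noteq> {} \<or> R \<inter> normalizer G R \<noteq> {}) \<longrightarrow>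
              (\<forall>C\<in>weak_components G L R. \<forall>D\<in>weak_components G L R. induced_iso G L R C D)))"
proof -
  \<comment> \<open>Taking l0 in the normaliser whenever L meets it lets one interpretation serve every claim.\<close>
  obtain l0 where l0: "l0 \<in> L" and l0_normal: "L \<inter> normalizer G L \<noteq> {} \<Longrightarrow> l0 \<in> normalizer G L"
    using \<open>L \<noteq> {}\<close> by blast
  have "generated_two_sided_group_digraph G L R l0"
    using assms l0
    by (simp add: generated_two_sided_group_digraph_def generated_two_sided_group_digraph_axioms_def
        based_two_sided_group_digraph_def based_two_sided_group_digraph_axioms_def
        two_sided_group_digraph_def two_sided_group_digraph_axioms_def)
  then interpret generated_two_sided_group_digraph G L R l0 .
  show ?thesis
  proof (intro conjI allI impI)
    show "infinite (weak_components G L R)" if "min_weak_conn_len G L R = \<infinity>"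
      using that by (rule weak_components_infinite)
    fix k assume k: "min_weak_conn_len G L R = enat k"
    show "card (weak_components G L R) = k" and "finite (weak_components G L R)"
      using weak_components_card[OF k] by simp_all
    show "\<forall>C\<in>weak_components G L R. \<forall>D\<in>weak_components G L R. \<exists>f. bij_betw f C D"
      using weak_components_bij by blast
    assume "L \<inter> normalizer G L \<noteq> {} \<or> R \<inter> normalizer G R \<noteq> {}"
    then show "\<forall>C\<in>weak_components G L R. \<forall>D\<in>weak_components G L R. induced_iso G L R C D"
      using weak_components_induced_iso l0_normal by blast
  qed
qed

end
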